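(* Let $0<\alpha<1$ and $p,q>0$. If $\lambda_1(SG_{\alpha,p}(A,B))\le\lambda_1(\mathcal{A}_{\alpha,q}(A,B))$ holds for all positive definite $2\times2$ matrices $A,B$, then $q/p\ge\max\{\alpha,1-\alpha\}$. Hence, if $SG_{\alpha,p}(A,B)\prec_w\mathcal{A}_{\alpha,q}(A,B)$ for all positive definite $2\times2$ matrices $A,B$, then $q/p\ge\max\{\alpha,1-\alpha\}$.
   Context: For positive definite $A,B$: $A\#B:=A^{1/2}(A^{-1/2}BA^{-1/2})^{1/2}A^{1/2}$; $F_\alpha(A,B):=(A^{-1}\#B)^\alpha A(A^{-1}\#B)^\alpha$; $SG_{\alpha,p}(A,B):=F_\alpha(A^p,B^p)^{1/p}$; $\mathcal{A}_{\alpha,q}(A,B):=((1-\alpha)A^q+\alpha B^q)^{1/q}$. For an $n\times n$ positive semidefinite $X$, $\lambda_1(X)\ge\dots\ge\lambda_n(X)$ are its eigenvalues in decreasing order with multiplicities. $X\prec_wY$ (weak majorization) means $\sum_{i=1}^k\lambda_i(X)\le\sum_{i=1}^k\lambda_i(Y)$ for $1\le k\le n$. *)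

theory Defs
  imports "HOL-Analysis.Analysis"
begin

type_synonym cmat2 = "complex^2^2"

definition adj2 :: "cmat2 \<Rightarrow> cmat2" where
  "adj2 A = (\<chi> i j. cnj (A $ j $ i))"

definition hermitian2 :: "cmat2 \<Rightarrow> bool" where
  "hermitian2 A \<longleftrightarrow> adj2 A = A"

definition posdef2 :: "cmat2 \<Rightarrow> bool" where
  "posdef2 A \<longleftrightarrow> hermitian2 A \<and>
     (\<forall>x::complex^2. x \<noteq> 0 \<longrightarrow>
        (\<Sum>i\<in>UNIV. cnj (x $ i) * (A *v x) $ i) \<in> \<real> \<and>
        Re (\<Sum>i\<in>UNIV. cnj (x $ i) * (A *v x) $ i) > 0)"

definition unitary2 :: "cmat2 \<Rightarrow> bool" where
  "unitary2 U \<longleftrightarrow> adj2 U ** U = mat 1"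

definition rdiag2 :: "(2 \<Rightarrow> real) \<Rightarrow> cmat2" where
  "rdiag2 d = (\<chi> i j. if i = j then complex_of_real (d i) else 0)"

text \<open>Real power A^r of a positive definite matrix via the spectral decomposition
  (functional calculus); well defined for positive definite A.\<close>
definition mpow :: "cmat2 \<Rightarrow> real \<Rightarrow> cmat2" where
  "mpow A r = (THE B. \<exists>U d. unitary2 U \<and> (\<forall>i. d i > 0) \<and>
       A = U ** rdiag2 d ** adj2 U \<and> B = U ** rdiag2 (\<lambda>i. d i powr r) ** adj2 U)"

definition gmean :: "cmat2 \<Rightarrow> cmat2 \<Rightarrow> cmat2" where
  "gmean A B = mpow A (1/2) **
      mpow (mpow A (-1/2) ** B ** mpow A (-1/2)) (1/2) ** mpow A (1/2)"

definition Falpha :: "real \<Rightarrow> cmat2 \<Rightarrow> cmat2 \<Rightarrow> cmat2" where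
  "Falpha \<alpha> A B = mpow (gmean (mpow A (-1)) B) \<alpha> ** A ** mpow (gmean (mpow A (-1)) B) \<alpha>"

definition SG :: "real \<Rightarrow> real \<Rightarrow> cmat2 \<Rightarrow> cmat2 \<Rightarrow> cmat2" where
  "SG \<alpha> p A B = mpow (Falpha \<alpha> (mpow A p) (mpow B p)) (1/p)"

definition AM :: "real \<Rightarrow> real \<Rightarrow> cmat2 \<Rightarrow> cmat2 \<Rightarrow> cmat2" where
  "AM \<alpha> q A B = mpow (((1 - \<alpha>) *\<^sub>R mpow A q) + (\<alpha> *\<^sub>R mpow B q)) (1/q)"

definition eigvals2 :: "cmat2 \<Rightarrow> complex set" where
  "eigvals2 X = {c. \<exists>v. v \<noteq> 0 \<and> X *v v = c *s v}"

definition lam1 :: "cmat2 \<Rightarrow> real" where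
  "lam1 X = Max (Re ` eigvals2 X)"

definition lam2 :: "cmat2 \<Rightarrow> real" where
  "lam2 X = Min (Re ` eigvals2 X)"

definition weak_maj2 :: "cmat2 \<Rightarrow> cmat2 \<Rightarrow> bool" where
  "weak_maj2 X Y \<longleftrightarrow> lam1 X \<le> lam1 Y \<and> lam1 X + lam2 X \<le> lam1 Y + lam2 Y"

end

theory Submission
  imports Defs
begin

text \<open>For a positive definite \<open>X\<close> and \<open>D = diag(1, k)\<close> the geometric mean
  \<open>X\<inverse> # DXD\<close> is \<open>D\<close>, so \<open>F\<^sub>\<alpha>(X, DXD) = D\<^sup>\<alpha> X D\<^sup>\<alpha>\<close>, whose largest eigenvalue is at
  least \<open>X\<^sub>1\<^sub>1\<close>. For \<open>A = X\<^bsup>1/p\<^esup>\<close>, \<open>B = (DXD)\<^bsup>1/p\<^esup>\<close> and \<open>r = q/p\<close> the hypothesis thus gives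
  \<open>X\<^sub>1\<^sub>1\<^sup>r \<le> \<lambda>\<^sub>1((1 - \<alpha>) X\<^sup>r + \<alpha> (DXD)\<^sup>r)\<close>. Now let \<open>X\<close> degenerate to the rank-one
  projection \<open>P\<close> onto \<open>(\<surd>z, \<surd>(1 - z))\<close> and let \<open>k \<rightarrow> 0\<close>, so that \<open>DXD \<rightarrow> diag(z, 0)\<close>:
  in the limit \<open>z\<^sup>r \<le> \<lambda>\<^sub>1((1 - \<alpha>) P + \<alpha> diag(z\<^sup>r, 0))\<close>, which fails for \<open>z\<close> close to 1
  unless \<open>r \<ge> \<alpha>\<close>. Exchanging the roles of \<open>X\<close> and \<open>DXD\<close> gives \<open>r \<ge> 1 - \<alpha>\<close>. Weak
  majorization contains the inequality for \<open>\<lambda>\<^sub>1\<close>.\<close>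

definition rmat2 :: "real \<Rightarrow> real \<Rightarrow> real \<Rightarrow> real \<Rightarrow> cmat2" where
  "rmat2 a b c d = (\<chi> i j. complex_of_real
     (if i = 1 then (if j = 1 then a else b) else (if j = 1 then c else d)))"

lemma two_neq_one [simp]: "(2::2) \<noteq> 1" "(1::2) \<noteq> 2"
  by auto

lemma rmat2_nth [simp]:
  "rmat2 a b c d $ 1 $ 1 = a" "rmat2 a b c d $ 1 $ 2 = b"
  "rmat2 a b c d $ 2 $ 1 = c" "rmat2 a b c d $ 2 $ 2 = d"
  by (simp_all add: rmat2_def)

lemma cmat2_eqI:
  "(A::cmat2) $ 1 $ 1 = B $ 1 $ 1 \<Longrightarrow> A $ 1 $ 2 = B $ 1 $ 2 \<Longrightarrow>
   A $ 2 $ 1 = B $ 2 $ 1 \<Longrightarrow> A $ 2 $ 2 = B $ 2 $ 2 \<Longrightarrow> A = B"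
  by (simp add: vec_eq_iff forall_2)

lemma rmat2_mult [simp]:
  "rmat2 a b c d ** rmat2 e f g h = rmat2 (a*e + b*g) (a*f + b*h) (c*e + d*g) (c*f + d*h)"
  by (rule cmat2_eqI) (simp_all add: matrix_matrix_mult_def sum_2)

lemma adj2_rmat2 [simp]: "adj2 (rmat2 a b c d) = rmat2 a c b d"
  by (rule cmat2_eqI) (simp_all add: adj2_def)

lemma scaleR_rmat2 [simp]: "r *\<^sub>R rmat2 a b c d = rmat2 (r*a) (r*b) (r*c) (r*d)"
  by (rule cmat2_eqI) (simp_all only: vector_scaleR_component rmat2_nth, simp_all add: scaleR_conv_of_real)

lemma add_rmat2 [simp]: "rmat2 a b c d + rmat2 e f g h = rmat2 (a+e) (b+f) (c+g) (d+h)"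
  by (rule cmat2_eqI) simp_all

lemma rmat2_eq_iff: "rmat2 a b c d = rmat2 e f g h \<longleftrightarrow> a = e \<and> b = f \<and> c = g \<and> d = h"
  by (metis rmat2_nth of_real_eq_iff)

lemma rdiag2_eq_rmat2: "rdiag2 d = rmat2 (d 1) 0 0 (d 2)"
  by (rule cmat2_eqI) (simp_all add: rdiag2_def)

lemma mat1_eq_rmat2: "mat 1 = rmat2 1 0 0 1"
  by (rule cmat2_eqI) (simp_all add: mat_def)


section \<open>Functions of unitarily diagonalized matrices\<close>

lemma adj2_mult: "adj2 (A ** B) = adj2 B ** adj2 A"
  by (simp add: adj2_def vec_eq_iff matrix_matrix_mult_def sum_2 mult.commute)

lemma adj2_adj2 [simp]: "adj2 (adj2 A) = A"
  by (simp add: adj2_def vec_eq_iff)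

lemma adj2_rdiag2 [simp]: "adj2 (rdiag2 d) = rdiag2 d"
  by (simp add: adj2_def rdiag2_def vec_eq_iff)

lemma rdiag2_mult: "rdiag2 d ** rdiag2 e = rdiag2 (\<lambda>i. d i * e i)"
  by (simp add: rdiag2_eq_rmat2)

lemma unitary2_mult_adj2: "unitary2 U \<Longrightarrow> U ** adj2 U = mat 1"
  unfolding unitary2_def using matrix_left_right_inverse by blast

lemma unitary2_mat1: "unitary2 (mat 1)"
  by (simp add: unitary2_def mat1_eq_rmat2)

lemma mult_rdiag2_nth: "(A ** rdiag2 d) $ i $ j = A $ i $ j * d j"
  using exhaust_2[of j] by (auto simp: matrix_matrix_mult_def sum_2 rdiag2_def)

lemma rdiag2_mult_nth: "(rdiag2 d ** A) $ i $ j = d i * A $ i $ j"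
  using exhaust_2[of i] by (auto simp: matrix_matrix_mult_def sum_2 rdiag2_def)

lemma rdiag2_mult_vec_nth: "(rdiag2 d *v v) $ i = d i * v $ i"
  using exhaust_2[of i] by (auto simp: matrix_vector_mult_def sum_2 rdiag2_def)

lemma unitary2_mult_vec_eq_0_iff:
  "unitary2 U \<Longrightarrow> adj2 U *v x = 0 \<longleftrightarrow> x = 0"
  by (metis unitary2_mult_adj2 matrix_vector_mul_assoc matrix_vector_mul_lid
      matrix_vector_mult_0_right)

text \<open>This makes \<open>mpow\<close> well defined: \<open>W = V\<^sup>* U\<close> intertwines the two diagonal
  matrices, so its nonzero entries sit where the spectra agree, and it also intertwines
  their powers.\<close>
lemma spectral_powr_unique:
  assumes U: "unitary2 U" and V: "unitary2 V"
    and eq: "U ** rdiag2 d ** adj2 U = V ** rdiag2 e ** adj2 V"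
  shows "U ** rdiag2 (\<lambda>i. d i powr r) ** adj2 U = V ** rdiag2 (\<lambda>i. e i powr r) ** adj2 V"
proof -
  define W where "W = adj2 V ** U"
  have UU: "adj2 U ** U = mat 1" and VV: "adj2 V ** V = mat 1"
    using U V unfolding unitary2_def by auto
  have "adj2 V ** (U ** rdiag2 d ** adj2 U) ** U = adj2 V ** (V ** rdiag2 e ** adj2 V) ** U"
    using eq by simp
  then have WD: "W ** rdiag2 d = rdiag2 e ** W"
    by (simp add: W_def matrix_mul_assoc UU VV)
      (metis UU VV matrix_mul_assoc matrix_mul_lid matrix_mul_rid)
  have "W $ i $ j * d j powr r = e i powr r * W $ i $ j" for i j
  proof -
    have "W $ i $ j * d j = e i * W $ i $ j"
      using arg_cong[OF WD, of "\<lambda>M. M $ i $ j"] by (simp add: mult_rdiag2_nth rdiag2_mult_nth)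
    then have "W $ i $ j = 0 \<or> d j = e i"
      by (auto simp: mult.commute)
    then show ?thesis
      by auto
  qed
  then have WDr: "W ** rdiag2 (\<lambda>i. d i powr r) = rdiag2 (\<lambda>i. e i powr r) ** W"
    by (simp add: vec_eq_iff mult_rdiag2_nth rdiag2_mult_nth)
  have "U ** rdiag2 (\<lambda>i. d i powr r) ** adj2 U = V ** (W ** rdiag2 (\<lambda>i. d i powr r)) ** adj2 U"
    by (simp add: W_def matrix_mul_assoc unitary2_mult_adj2[OF V])
  also have "\<dots> = V ** rdiag2 (\<lambda>i. e i powr r) ** (W ** adj2 U)"
    by (simp add: WDr matrix_mul_assoc)
  also have "W ** adj2 U = adj2 V"
    by (simp add: W_def unitary2_mult_adj2[OF U] flip: matrix_mul_assoc)
  finally show ?thesis .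
qed

lemma mpow_spectral:
  assumes U: "unitary2 U" and d: "\<forall>i. d i > 0"
  shows "mpow (U ** rdiag2 d ** adj2 U) r = U ** rdiag2 (\<lambda>i. d i powr r) ** adj2 U"
  unfolding mpow_def
proof (rule the_equality)
  show "\<exists>U' d'. unitary2 U' \<and> (\<forall>i. d' i > 0) \<and> U ** rdiag2 d ** adj2 U = U' ** rdiag2 d' ** adj2 U'
      \<and> U ** rdiag2 (\<lambda>i. d i powr r) ** adj2 U = U' ** rdiag2 (\<lambda>i. d' i powr r) ** adj2 U'"
    using assms by blast
next
  fix B
  assume "\<exists>U' d'. unitary2 U' \<and> (\<forall>i. d' i > 0) \<and> U ** rdiag2 d ** adj2 U = U' ** rdiag2 d' ** adj2 U'
      \<and> B = U' ** rdiag2 (\<lambda>i. d' i powr r) ** adj2 U'"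
  then show "B = U ** rdiag2 (\<lambda>i. d i powr r) ** adj2 U"
    using spectral_powr_unique[OF U] by metis
qed

lemma mpow_spectral_powr:
  assumes "unitary2 U" "\<forall>i. d i > 0"
  shows "mpow (U ** rdiag2 (\<lambda>i. d i powr s) ** adj2 U) t = U ** rdiag2 (\<lambda>i. d i powr (s * t)) ** adj2 U"
proof -
  have "\<forall>i. d i \<noteq> 0"
    using assms(2) by (metis less_irrefl)
  then show ?thesis
    using mpow_spectral[OF assms(1), of "\<lambda>i. d i powr s" t] by (simp add: powr_powr)
qed

lemma spectral_mult:
  assumes "unitary2 U"
  shows "(U ** rdiag2 d ** adj2 U) ** (U ** rdiag2 e ** adj2 U) = U ** rdiag2 (\<lambda>i. d i * e i) ** adj2 U"
proof -
  have "(U ** rdiag2 d ** adj2 U) ** (U ** rdiag2 e ** adj2 U)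
      = U ** rdiag2 d ** (adj2 U ** U) ** rdiag2 e ** adj2 U"
    by (simp add: matrix_mul_assoc)
  also have "\<dots> = U ** rdiag2 (\<lambda>i. d i * e i) ** adj2 U"
    using assms by (simp add: unitary2_def rdiag2_mult matrix_mul_assoc[symmetric])
  finally show ?thesis .
qed

lemma spectral_one: "unitary2 U \<Longrightarrow> U ** rdiag2 (\<lambda>i. 1) ** adj2 U = mat 1"
  by (simp add: rdiag2_eq_rmat2 flip: mat1_eq_rmat2) (rule unitary2_mult_adj2)

definition powr_slope :: "real \<Rightarrow> real \<Rightarrow> real \<Rightarrow> real" where
  "powr_slope l1 l2 r = (if l1 = l2 then 0 else (l1 powr r - l2 powr r) / (l1 - l2))"

definition powr_intercept :: "real \<Rightarrow> real \<Rightarrow> real \<Rightarrow> real" where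
  "powr_intercept l1 l2 r =
     (if l1 = l2 then l1 powr r else (l1 * l2 powr r - l2 * l1 powr r) / (l1 - l2))"

lemma powr_slope_intercept:
  "powr_slope l1 l2 r * l1 + powr_intercept l1 l2 r = l1 powr r"
  "powr_slope l1 l2 r * l2 + powr_intercept l1 l2 r = l2 powr r"
proof -
  consider "l1 = l2" | "l1 - l2 \<noteq> 0"
    by fastforce
  then show "powr_slope l1 l2 r * l1 + powr_intercept l1 l2 r = l1 powr r"
    "powr_slope l1 l2 r * l2 + powr_intercept l1 l2 r = l2 powr r"
    by cases (simp_all add: powr_slope_def powr_intercept_def times_divide_eq_left
        divide_eq_eq algebra_simps flip: add_divide_distrib)
qed

lemma matrix_add_rdistrib: "(A + B) ** C = A ** C + B ** C"
  by (vector matrix_matrix_mult_def sum.distrib[symmetric] field_simps)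

text \<open>Lagrange interpolation: a function of a matrix with eigenvalues \<open>l1, l2\<close> is the affine
  function of the matrix that agrees with it at \<open>l1\<close> and \<open>l2\<close>.\<close>
lemma spectral_powr_affine:
  assumes U: "unitary2 U"
  shows "U ** rdiag2 (\<lambda>i. d i powr r) ** adj2 U =
    powr_slope (d 1) (d 2) r *\<^sub>R (U ** rdiag2 d ** adj2 U) + powr_intercept (d 1) (d 2) r *\<^sub>R mat 1"
proof -
  have "rdiag2 (\<lambda>i. d i powr r) =
      powr_slope (d 1) (d 2) r *\<^sub>R rdiag2 d + powr_intercept (d 1) (d 2) r *\<^sub>R mat 1"
    by (simp add: rdiag2_eq_rmat2 mat1_eq_rmat2 rmat2_eq_iff powr_slope_intercept)
  then show ?thesis
    by (simp add: matrix_add_ldistrib matrix_add_rdistrib matrix_scalar_ac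
        scalar_matrix_assoc[symmetric] unitary2_mult_adj2[OF U])
qed

lemma eigvals2_unitary_conj:
  assumes U: "unitary2 U"
  shows "eigvals2 (U ** M ** adj2 U) = eigvals2 M"
proof -
  have UU: "adj2 U ** U = mat 1"
    using U unitary2_def by auto
  have eigvec_iff: "(U ** M ** adj2 U) *v v = c *s v \<longleftrightarrow> M *v (adj2 U *v v) = c *s (adj2 U *v v)"
    for v c
  proof
    assume "(U ** M ** adj2 U) *v v = c *s v"
    then have "adj2 U *v ((U ** M ** adj2 U) *v v) = adj2 U *v (c *s v)"
      by simp
    then show "M *v (adj2 U *v v) = c *s (adj2 U *v v)"
      by (simp add: matrix_vector_mul_assoc vector_scalar_commute matrix_mul_assoc UU)
  next
    assume "M *v (adj2 U *v v) = c *s (adj2 U *v v)"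
    then have "U *v (M *v (adj2 U *v v)) = U *v (c *s (adj2 U *v v))"
      by simp
    then show "(U ** M ** adj2 U) *v v = c *s v"
      by (simp add: matrix_vector_mul_assoc vector_scalar_commute unitary2_mult_adj2[OF U]
          matrix_mul_assoc)
  qed
  have UUw: "adj2 U *v (U *v w) = w" for w
    by (simp add: matrix_vector_mul_assoc UU)
  show ?thesis
  proof (intro set_eqI iffI)
    fix c
    assume "c \<in> eigvals2 (U ** M ** adj2 U)"
    then obtain v where "v \<noteq> 0" "(U ** M ** adj2 U) *v v = c *s v"
      unfolding eigvals2_def by blast
    then have "adj2 U *v v \<noteq> 0" "M *v (adj2 U *v v) = c *s (adj2 U *v v)"
      by (simp_all add: eigvec_iff unitary2_mult_vec_eq_0_iff[OF U])
    then show "c \<in> eigvals2 M"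
      unfolding eigvals2_def by blast
  next
    fix c
    assume "c \<in> eigvals2 M"
    then obtain w where w: "w \<noteq> 0" "M *v w = c *s w"
      unfolding eigvals2_def by blast
    have "U *v w \<noteq> 0"
      using w(1) UUw[of w] by auto
    moreover have "(U ** M ** adj2 U) *v (U *v w) = c *s (U *v w)"
      using w(2) by (simp add: eigvec_iff UUw)
    ultimately show "c \<in> eigvals2 (U ** M ** adj2 U)"
      unfolding eigvals2_def by blast
  qed
qed

lemma eigvals2_rdiag2: "eigvals2 (rdiag2 e) = {complex_of_real (e 1), complex_of_real (e 2)}"
proof (intro set_eqI iffI)
  fix c
  assume "c \<in> eigvals2 (rdiag2 e)"
  then obtain v where v: "v \<noteq> 0" "rdiag2 e *v v = c *s v"
    unfolding eigvals2_def by blast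
  obtain i where "v $ i \<noteq> 0"
    using v(1) by (metis vec_eq_iff zero_index)
  moreover have "e i * v $ i = c * v $ i"
    using arg_cong[OF v(2), of "\<lambda>w. w $ i"] by (simp add: rdiag2_mult_vec_nth)
  ultimately have "c = e i"
    by simp
  then show "c \<in> {complex_of_real (e 1), complex_of_real (e 2)}"
    using exhaust_2[of i] by auto
next
  fix c
  assume "c \<in> {complex_of_real (e 1), complex_of_real (e 2)}"
  then obtain i where "c = e i"
    by auto
  then have "rdiag2 e *v axis i 1 = c *s axis i 1"
    by (simp add: vec_eq_iff rdiag2_mult_vec_nth axis_def)
  moreover have "axis i (1::complex) \<noteq> 0"
    by (simp add: axis_eq_0_iff)
  ultimately show "c \<in> eigvals2 (rdiag2 e)"
    unfolding eigvals2_def by blast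
qed

lemma lam1_spectral: "unitary2 U \<Longrightarrow> lam1 (U ** rdiag2 e ** adj2 U) = max (e 1) (e 2)"
  unfolding lam1_def by (simp add: eigvals2_unitary_conj eigvals2_rdiag2)


lemma quadratic_form_congruence:
  "(\<Sum>i\<in>UNIV. cnj (x $ i) * ((U ** B ** adj2 U) *v x) $ i) =
   (\<Sum>k\<in>UNIV. cnj ((adj2 U *v x) $ k) * (B *v (adj2 U *v x)) $ k)"
  by (simp add: sum_2 matrix_vector_mult_def matrix_matrix_mult_def adj2_def algebra_simps)

lemma posdef2_congruence:
  assumes B: "posdef2 B" and inj: "\<And>x. adj2 U *v x = 0 \<Longrightarrow> x = 0"
  shows "posdef2 (U ** B ** adj2 U)"
  using B unfolding posdef2_def hermitian2_def quadratic_form_congruence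
  by (auto simp: adj2_mult matrix_mul_assoc dest: inj)

lemma posdef2_rdiag2:
  assumes d: "\<forall>i. d i > 0"
  shows "posdef2 (rdiag2 d)"
  unfolding posdef2_def hermitian2_def
proof (intro conjI allI impI)
  fix x :: "complex^2"
  assume "x \<noteq> 0"
  then obtain i where "x $ i \<noteq> 0"
    by (metis vec_eq_iff zero_index)
  have quad: "cnj z * (of_real r * z) = of_real (r * (cmod z)\<^sup>2)" for z r
    by (metis complex_norm_square mult.commute mult.left_commute of_real_mult)
  have "(\<Sum>k\<in>UNIV. cnj (x $ k) * (rdiag2 d *v x) $ k) = of_real (\<Sum>k\<in>UNIV. d k * (cmod (x $ k))\<^sup>2)"
    by (simp add: rdiag2_mult_vec_nth quad sum_2)
  moreover have "(\<Sum>k\<in>UNIV. d k * (cmod (x $ k))\<^sup>2) > 0"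
  proof (rule sum_pos2)
    show "0 < d i * (cmod (x $ i))\<^sup>2"
      using d \<open>x $ i \<noteq> 0\<close> by simp
    show "0 \<le> d k * (cmod (x $ k))\<^sup>2" for k
      using d by (simp add: less_imp_le)
  qed simp_all
  ultimately show "(\<Sum>k\<in>UNIV. cnj (x $ k) * (rdiag2 d *v x) $ k) \<in> \<real>"
    "Re (\<Sum>k\<in>UNIV. cnj (x $ k) * (rdiag2 d *v x) $ k) > 0"
    by simp_all
qed simp

lemma posdef2_spectral: "unitary2 U \<Longrightarrow> \<forall>i. d i > 0 \<Longrightarrow> posdef2 (U ** rdiag2 d ** adj2 U)"
  by (rule posdef2_congruence) (simp_all add: posdef2_rdiag2 unitary2_mult_vec_eq_0_iff)

lemma posdef2_add:
  assumes A: "posdef2 A" and B: "posdef2 B"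
  shows "posdef2 (A + B)"
proof -
  define Q where "Q M x = (\<Sum>i\<in>UNIV. cnj (x $ i) * (M *v x) $ i)" for M and x :: "complex^2"
  have "Q (A + B) x = Q A x + Q B x" for x
    by (simp add: Q_def matrix_vector_mult_add_rdistrib distrib_left sum.distrib)
  moreover have "adj2 (A + B) = adj2 A + adj2 B"
    by (simp add: adj2_def vec_eq_iff)
  ultimately show ?thesis
    using A B unfolding posdef2_def hermitian2_def Q_def[symmetric]
    by (metis Reals_add add_pos_pos plus_complex.sel(1))
qed

section \<open>Real symmetric matrices\<close>

type_synonym sym2 = "real \<times> real \<times> real"

fun sym2_mat :: "sym2 \<Rightarrow> cmat2" where
  "sym2_mat (a, b, c) = rmat2 a b b c"

fun sym2_pd :: "sym2 \<Rightarrow> bool" where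
  "sym2_pd (a, b, c) \<longleftrightarrow> 0 < a \<and> b\<^sup>2 < a * c"

fun eig_max :: "sym2 \<Rightarrow> real" where
  "eig_max (a, b, c) = (a + c) / 2 + sqrt (((a - c) / 2)\<^sup>2 + b\<^sup>2)"

fun eig_min :: "sym2 \<Rightarrow> real" where
  "eig_min (a, b, c) = (a + c) / 2 - sqrt (((a - c) / 2)\<^sup>2 + b\<^sup>2)"

definition sym2_eigvals :: "sym2 \<Rightarrow> 2 \<Rightarrow> real" where
  "sym2_eigvals S i = (if i = 1 then eig_max S else eig_min S)"

definition sym2_powr :: "real \<Rightarrow> sym2 \<Rightarrow> sym2" where
  "sym2_powr r S = powr_slope (eig_max S) (eig_min S) r *\<^sub>R S
     + powr_intercept (eig_max S) (eig_min S) r *\<^sub>R (1, 0, 1)"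

fun diag_congr :: "real \<Rightarrow> sym2 \<Rightarrow> sym2" where
  "diag_congr k (a, b, c) = (a, k * b, k\<^sup>2 * c)"

lemma sym2_mat_add: "sym2_mat (S + T) = sym2_mat S + sym2_mat T"
  by (cases S; cases T) simp

lemma sym2_mat_scaleR: "sym2_mat (x *\<^sub>R S) = x *\<^sub>R sym2_mat S"
  by (cases S) simp

lemma sym2_mat_diag_congr: "sym2_mat (diag_congr k S) = rmat2 1 0 0 k ** sym2_mat S ** rmat2 1 0 0 k"
  by (cases S) (simp add: rmat2_eq_iff power2_eq_square mult_ac)

lemma diag_congr_diag_congr: "diag_congr k (diag_congr l S) = diag_congr (k * l) S"
  by (cases S) (simp add: power_mult_distrib)

lemma diag_congr_one: "diag_congr 1 S = S"
  by (cases S) simp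

lemma fst_diag_congr [simp]: "fst (diag_congr k S) = fst S"
  by (cases S) simp

lemma sym2_pd_scaleR: "0 < x \<Longrightarrow> sym2_pd S \<Longrightarrow> sym2_pd (x *\<^sub>R S)"
  by (cases S) (simp add: power_mult_distrib power2_eq_square mult_ac)

lemma sym2_pd_diag_congr: "0 < k \<Longrightarrow> sym2_pd S \<Longrightarrow> sym2_pd (diag_congr k S)"
  by (cases S) (simp add: power_mult_distrib mult_ac)

lemma eig_min_le_eig_max: "eig_min S \<le> eig_max S"
  by (cases S) simp

lemma eig_max_ge: "a \<le> eig_max (a, b, c)" "c \<le> eig_max (a, b, c)"
proof -
  have "\<bar>a - c\<bar> / 2 \<le> sqrt (((a - c) / 2)\<^sup>2 + b\<^sup>2)"
    by (rule real_le_rsqrt) (simp add: power_divide)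
  then show "a \<le> eig_max (a, b, c)" "c \<le> eig_max (a, b, c)"
    by (simp_all add: abs_le_iff field_simps)
qed

lemma eig_max_char: "(eig_max (a, b, c) - a) * (eig_max (a, b, c) - c) = b\<^sup>2"
proof -
  define s where "s = sqrt (((a - c) / 2)\<^sup>2 + b\<^sup>2)"
  have e: "eig_max (a, b, c) - a = s - (a - c) / 2" "eig_max (a, b, c) - c = s + (a - c) / 2"
    unfolding eig_max.simps s_def[symmetric] by (simp_all add: field_simps)
  have "(s - (a - c) / 2) * (s + (a - c) / 2) = s\<^sup>2 - ((a - c) / 2)\<^sup>2"
    by (simp add: power2_eq_square algebra_simps)
  also have "s\<^sup>2 = ((a - c) / 2)\<^sup>2 + b\<^sup>2"
    unfolding s_def by simp
  finally show ?thesis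
    unfolding e by simp
qed

lemma eig_max_diag: "eig_max (a, 0, c) = max a c"
  by (simp add: real_sqrt_abs max_def abs_if field_simps del: power_divide)

lemma eig_max_less:
  assumes "a < g" "c < g" "b\<^sup>2 < (g - a) * (g - c)"
  shows "eig_max (a, b, c) < g"
proof -
  define R where "R = g - (a + c) / 2"
  have "R\<^sup>2 - ((a - c) / 2)\<^sup>2 = (g - a) * (g - c)"
    unfolding R_def by (simp add: power2_eq_square field_simps)
  then have "sqrt (((a - c) / 2)\<^sup>2 + b\<^sup>2) < sqrt (R\<^sup>2)"
    using assms(3) by (simp only: real_sqrt_less_iff)
  also have "\<dots> = R"
    using assms(1,2) by (simp add: R_def)
  finally show ?thesis
    by (simp add: R_def)
qed

lemma eig_min_pos: "sym2_pd S \<Longrightarrow> 0 < eig_min S"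
proof (cases S)
  case (fields a b c)
  assume "sym2_pd S"
  then have a: "0 < a" and det: "b\<^sup>2 < a * c"
    by (simp_all add: fields)
  then have "0 < a * c"
    using zero_le_power2[of b] by linarith
  then have "0 < c"
    using a by (simp add: zero_less_mult_iff)
  have "((a - c) / 2)\<^sup>2 + b\<^sup>2 < ((a + c) / 2)\<^sup>2"
    using det by (simp add: power2_eq_square field_simps)
  then have "sqrt (((a - c) / 2)\<^sup>2 + b\<^sup>2) < sqrt (((a + c) / 2)\<^sup>2)"
    by (simp only: real_sqrt_less_iff)
  also have "\<dots> = (a + c) / 2"
    using a \<open>0 < c\<close> by simp
  finally show ?thesis
    by (simp add: fields)
qed

lemma sym2_eigvals_pos: "sym2_pd S \<Longrightarrow> 0 < sym2_eigvals S i"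
  using eig_min_pos[of S] eig_min_le_eig_max[of S] by (simp add: sym2_eigvals_def)

lemma unitary2_rotation: "x\<^sup>2 + y\<^sup>2 = 1 \<Longrightarrow> unitary2 (rmat2 x (-y) y x)"
  by (simp add: unitary2_def mat1_eq_rmat2 power2_eq_square add.commute)

lemma rotation_diagonalizes:
  assumes "x\<^sup>2 + y\<^sup>2 = 1" "a * x + b * y = l * x" "b * x + c * y = l * y"
  shows "rmat2 a b b c = rmat2 x (-y) y x ** rmat2 l 0 0 (a + c - l) ** adj2 (rmat2 x (-y) y x)"
  using assms by (simp add: rmat2_eq_iff) algebra

lemma eig_max_unit_eigenvector:
  obtains x y where "x\<^sup>2 + y\<^sup>2 = 1"
    "a * x + b * y = eig_max (a, b, c) * x" "b * x + c * y = eig_max (a, b, c) * y"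
proof -
  define l where "l = eig_max (a, b, c)"
  consider "b = 0" "c \<le> a" | "b = 0" "a < c" | "b \<noteq> 0"
    by linarith
  then show ?thesis
  proof cases
    case 1
    then have "eig_max (a, b, c) = a"
      using eig_max_diag[of a c] by (simp del: eig_max.simps)
    then show ?thesis
      using 1 by (intro that[of 1 0]) (simp_all del: eig_max.simps)
  next
    case 2
    then have "eig_max (a, b, c) = c"
      using eig_max_diag[of a c] by (simp del: eig_max.simps)
    then show ?thesis
      using 2 by (intro that[of 0 1]) (simp_all del: eig_max.simps)
  next
    case 3
    define n where "n = sqrt (b\<^sup>2 + (l - a)\<^sup>2)"
    have n: "0 < n" "n\<^sup>2 = b\<^sup>2 + (l - a)\<^sup>2"
      using 3 by (simp_all add: n_def add_pos_nonneg)
    have "(l - a) * (l - c) = b\<^sup>2"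
      unfolding l_def by (rule eig_max_char)
    then have "(b / n)\<^sup>2 + ((l - a) / n)\<^sup>2 = 1" "a * (b / n) + b * ((l - a) / n) = l * (b / n)"
      "b * (b / n) + c * ((l - a) / n) = l * ((l - a) / n)"
      using n by (simp_all add: power_divide field_simps power2_eq_square)
    then show ?thesis
      unfolding l_def by (rule that)
  qed
qed

lemma sym2_spectral:
  obtains U where "unitary2 U" "sym2_mat S = U ** rdiag2 (sym2_eigvals S) ** adj2 U"
proof (cases S)
  case (fields a b c)
  obtain x y where xy: "x\<^sup>2 + y\<^sup>2 = 1"
    "a * x + b * y = eig_max (a, b, c) * x" "b * x + c * y = eig_max (a, b, c) * y"
    by (rule eig_max_unit_eigenvector)
  have "rdiag2 (sym2_eigvals S) = rmat2 (eig_max S) 0 0 (a + c - eig_max S)"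
    by (simp add: rdiag2_eq_rmat2 sym2_eigvals_def fields rmat2_eq_iff field_simps)
  then show ?thesis
    using that[OF unitary2_rotation[OF xy(1)]] rotation_diagonalizes[OF xy] by (simp add: fields)
qed

lemma sym2_eigvals_simps [simp]: "sym2_eigvals S 1 = eig_max S" "sym2_eigvals S 2 = eig_min S"
  by (simp_all add: sym2_eigvals_def)

lemma adj2_sym2_mat [simp]: "adj2 (sym2_mat S) = sym2_mat S"
  by (cases S) simp

lemma mpow_sym2_mat_spectral:
  assumes "sym2_pd S"
  obtains U where "unitary2 U" "sym2_mat S = U ** rdiag2 (sym2_eigvals S) ** adj2 U"
    "\<And>r. mpow (sym2_mat S) r = U ** rdiag2 (\<lambda>i. sym2_eigvals S i powr r) ** adj2 U"
proof -
  obtain U where U: "unitary2 U" "sym2_mat S = U ** rdiag2 (sym2_eigvals S) ** adj2 U"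
    by (rule sym2_spectral)
  then show ?thesis
    using that mpow_spectral[OF U(1)] sym2_eigvals_pos[OF assms] by simp
qed

lemma mpow_sym2_mat:
  assumes "sym2_pd S"
  shows "mpow (sym2_mat S) r = sym2_mat (sym2_powr r S)"
proof -
  obtain U where U: "unitary2 U" "sym2_mat S = U ** rdiag2 (sym2_eigvals S) ** adj2 U"
    and pow: "mpow (sym2_mat S) r = U ** rdiag2 (\<lambda>i. sym2_eigvals S i powr r) ** adj2 U"
    using mpow_sym2_mat_spectral[OF assms] by metis
  show ?thesis
    unfolding pow spectral_powr_affine[OF U(1)] U(2)[symmetric]
    by (simp add: sym2_powr_def sym2_mat_add sym2_mat_scaleR mat1_eq_rmat2)
qed

lemma lam1_mpow_sym2_mat:
  assumes S: "sym2_pd S" and r: "0 \<le> r"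
  shows "lam1 (mpow (sym2_mat S) r) = eig_max S powr r"
proof -
  obtain U where U: "unitary2 U"
    and pow: "mpow (sym2_mat S) r = U ** rdiag2 (\<lambda>i. sym2_eigvals S i powr r) ** adj2 U"
    using mpow_sym2_mat_spectral[OF S] by metis
  have "eig_min S powr r \<le> eig_max S powr r"
    using eig_min_pos[OF S] eig_min_le_eig_max r by (simp add: powr_mono2)
  then show ?thesis
    unfolding pow lam1_spectral[OF U] by simp
qed

lemma posdef2_mpow_sym2_mat:
  assumes "sym2_pd S"
  shows "posdef2 (mpow (sym2_mat S) r)"
proof -
  obtain U where "unitary2 U"
    "mpow (sym2_mat S) r = U ** rdiag2 (\<lambda>i. sym2_eigvals S i powr r) ** adj2 U"
    using mpow_sym2_mat_spectral[OF assms] by metis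
  moreover have "\<forall>i. 0 < sym2_eigvals S i powr r"
    using sym2_eigvals_pos[OF assms] by (simp add: less_imp_neq[symmetric])
  ultimately show ?thesis
    by (simp add: posdef2_spectral)
qed

lemma mpow_mpow_sym2_mat:
  assumes "sym2_pd S"
  shows "mpow (mpow (sym2_mat S) s) t = mpow (sym2_mat S) (s * t)"
proof -
  obtain U where "unitary2 U"
    "\<And>r. mpow (sym2_mat S) r = U ** rdiag2 (\<lambda>i. sym2_eigvals S i powr r) ** adj2 U"
    using mpow_sym2_mat_spectral[OF assms] by metis
  then show ?thesis
    using sym2_eigvals_pos[OF assms] by (simp add: mpow_spectral_powr)
qed

lemma mpow_sym2_mat_one:
  assumes "sym2_pd S"
  shows "mpow (sym2_mat S) 1 = sym2_mat S"
proof -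
  obtain U where "sym2_mat S = U ** rdiag2 (sym2_eigvals S) ** adj2 U"
    "mpow (sym2_mat S) 1 = U ** rdiag2 (\<lambda>i. sym2_eigvals S i powr 1) ** adj2 U"
    using mpow_sym2_mat_spectral[OF assms] by metis
  then show ?thesis
    using sym2_eigvals_pos[OF assms] by (simp add: less_imp_le)
qed

lemma posdef2_sym2_mat_iff: "posdef2 (sym2_mat S) \<longleftrightarrow> sym2_pd S"
proof
  assume "sym2_pd S"
  then show "posdef2 (sym2_mat S)"
    using posdef2_mpow_sym2_mat[of S 1] mpow_sym2_mat_one by simp
next
  obtain a b c where S: "S = (a, b, c)"
    by (rule prod_cases3)
  assume pd: "posdef2 (sym2_mat S)"
  have quad: "Re (\<Sum>i\<in>UNIV. cnj (x $ i) * (rmat2 a b b c *v x) $ i) > 0" if "x \<noteq> 0" for x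
    using pd that unfolding posdef2_def S by simp
  define e1 :: "complex^2" where "e1 = (\<chi> i. if i = 1 then 1 else 0)"
  define v :: "complex^2" where "v = (\<chi> i. if i = 1 then - of_real b else of_real a)"
  have "e1 $ 1 = 1"
    by (simp add: e1_def)
  then have "e1 \<noteq> 0"
    by (metis zero_index zero_neq_one)
  from quad[OF this] have a: "0 < a"
    by (simp add: e1_def sum_2 matrix_vector_mult_def)
  have "v $ 2 = of_real a"
    by (simp add: v_def)
  then have "v \<noteq> 0"
    using a by (metis less_irrefl of_real_eq_0_iff zero_index)
  have "(\<Sum>i\<in>UNIV. cnj (v $ i) * (rmat2 a b b c *v v) $ i) = of_real (a * (a * c - b\<^sup>2))"
    by (simp add: v_def sum_2 matrix_vector_mult_def power2_eq_square algebra_simps)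
  with quad[OF \<open>v \<noteq> 0\<close>] have "0 < a * (a * c - b\<^sup>2)"
    by simp
  then show "sym2_pd S"
    using a by (simp add: S zero_less_mult_iff)
qed

lemma sym2_pd_sym2_powr: "sym2_pd S \<Longrightarrow> sym2_pd (sym2_powr r S)"
  by (metis mpow_sym2_mat posdef2_mpow_sym2_mat posdef2_sym2_mat_iff)

lemma sym2_pd_add: "sym2_pd S \<Longrightarrow> sym2_pd T \<Longrightarrow> sym2_pd (S + T)"
  by (simp add: posdef2_add sym2_mat_add flip: posdef2_sym2_mat_iff)

lemma mpow_half_square_sym2_mat:
  assumes "sym2_pd S"
  shows "mpow (sym2_mat S ** sym2_mat S) (1/2) = sym2_mat S"
proof -
  obtain U where U: "unitary2 U" "sym2_mat S = U ** rdiag2 (sym2_eigvals S) ** adj2 U"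
    by (rule sym2_spectral)
  have d: "0 < sym2_eigvals S i" for i
    using sym2_eigvals_pos[OF assms] .
  then have "(\<lambda>i. (sym2_eigvals S i * sym2_eigvals S i) powr (1/2)) = sym2_eigvals S"
    by (simp add: fun_eq_iff powr_half_sqrt less_imp_le)
  then show ?thesis
    using d U by (simp add: spectral_mult mpow_spectral)
qed

section \<open>The spectral geometric mean of diagonally congruent matrices\<close>

lemma mpow_rmat2_diag:
  assumes "0 < k"
  shows "mpow (rmat2 1 0 0 k) s = rmat2 1 0 0 (k powr s)"
proof -
  have "rmat2 1 0 0 k = mat 1 ** rdiag2 (\<lambda>i. if i = 1 then 1 else k) ** adj2 (mat 1)"
    by (simp add: rdiag2_eq_rmat2 mat1_eq_rmat2)
  then show ?thesis
    using mpow_spectral[OF unitary2_mat1, of "\<lambda>i. if i = 1 then 1 else k" s] assms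
    by (simp add: rdiag2_eq_rmat2 mat1_eq_rmat2)
qed

lemma sym2_mat_sandwich:
  "sym2_mat (a, b, c) ** rmat2 1 0 0 k ** sym2_mat (a, b, c) =
   sym2_mat (a\<^sup>2 + k * b\<^sup>2, a * b + k * b * c, b\<^sup>2 + k * c\<^sup>2)"
  by (simp add: rmat2_eq_iff power2_eq_square algebra_simps)

lemma sym2_pd_sandwich:
  assumes "0 < k" "sym2_pd (a, b, c)"
  shows "sym2_pd (a\<^sup>2 + k * b\<^sup>2, a * b + k * b * c, b\<^sup>2 + k * c\<^sup>2)"
proof -
  have "(a * b + k * b * c)\<^sup>2 = (a\<^sup>2 + k * b\<^sup>2) * (b\<^sup>2 + k * c\<^sup>2) - k * (a * c - b\<^sup>2)\<^sup>2"
    by (simp add: power2_eq_square algebra_simps)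
  moreover have "0 < k * (a * c - b\<^sup>2)\<^sup>2" "0 < a\<^sup>2 + k * b\<^sup>2"
    using assms by (simp_all add: add_pos_nonneg)
  ultimately show ?thesis
    by simp
qed

text \<open>The geometric mean \<open>X\<inverse> # Y\<close> is the unique positive definite solution \<open>G\<close> of
  \<open>G X G = Y\<close>; for \<open>Y = D X D\<close> with \<open>D = diag(1, k)\<close> it is therefore \<open>D\<close>.\<close>
lemma gmean_inverse_diag_congr:
  assumes S: "sym2_pd S" and k: "0 < k"
  shows "gmean (mpow (sym2_mat S) (-1)) (sym2_mat (diag_congr k S)) = rmat2 1 0 0 k"
proof -
  let ?X = "sym2_mat S" and ?D = "rmat2 1 0 0 k"
  obtain U where U: "unitary2 U"
    and pow: "\<And>r. mpow ?X r = U ** rdiag2 (\<lambda>i. sym2_eigvals S i powr r) ** adj2 U"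
    using mpow_sym2_mat_spectral[OF S] by metis
  define H where "H = mpow ?X (1/2)"
  define K where "K = mpow ?X (-1/2)"
  have inv_pow: "mpow (mpow ?X (-1)) (-1/2) = H" "mpow (mpow ?X (-1)) (1/2) = K"
    by (simp_all add: mpow_mpow_sym2_mat[OF S] H_def K_def)
  have d: "sym2_eigvals S i \<noteq> 0" for i
    using sym2_eigvals_pos[OF S] by (metis less_irrefl)
  have KH: "K ** H = mat 1" and HK: "H ** K = mat 1"
    using d spectral_one[OF U]
    by (simp_all add: H_def K_def pow spectral_mult[OF U] flip: powr_add)
  have HH: "H ** H = ?X"
    using d mpow_sym2_mat_one[OF S]
    by (simp add: H_def pow spectral_mult[OF U] flip: powr_add)
  obtain a b c where h: "H = sym2_mat (a, b, c)" "sym2_pd (a, b, c)"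
    using mpow_sym2_mat[OF S] sym2_pd_sym2_powr[OF S] H_def by (metis prod_cases3)
  define P where "P = H ** ?D ** H"
  have P: "P = sym2_mat (a\<^sup>2 + k * b\<^sup>2, a * b + k * b * c, b\<^sup>2 + k * c\<^sup>2)"
    by (simp only: P_def h sym2_mat_sandwich)
  have sqrt_P: "mpow (P ** P) (1/2) = P"
    unfolding P by (rule mpow_half_square_sym2_mat[OF sym2_pd_sandwich[OF k h(2)]])
  have "H ** sym2_mat (diag_congr k S) ** H = P ** P"
    by (simp add: P_def sym2_mat_diag_congr HH[symmetric] matrix_mul_assoc)
  then have "gmean (mpow ?X (-1)) (sym2_mat (diag_congr k S)) = K ** P ** K"
    unfolding gmean_def inv_pow by (simp add: sqrt_P)
  also have "\<dots> = (K ** H) ** ?D ** (H ** K)"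
    by (simp add: P_def matrix_mul_assoc)
  finally show ?thesis
    by (simp add: KH HK)
qed

lemma Falpha_diag_congr:
  assumes "sym2_pd S" "0 < k"
  shows "Falpha \<alpha> (sym2_mat S) (sym2_mat (diag_congr k S)) = sym2_mat (diag_congr (k powr \<alpha>) S)"
  unfolding Falpha_def gmean_inverse_diag_congr[OF assms] mpow_rmat2_diag[OF assms(2)]
  by (rule sym2_mat_diag_congr[symmetric])

lemma lam1_SG_diag_congr:
  assumes S: "sym2_pd S" and k: "0 < k" and p: "0 < p"
  shows "lam1 (SG \<alpha> p (mpow (sym2_mat S) (1/p)) (mpow (sym2_mat (diag_congr k S)) (1/p)))
    = eig_max (diag_congr (k powr \<alpha>) S) powr (1/p)"
proof -
  have T: "sym2_pd (diag_congr k S)"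
    using sym2_pd_diag_congr[OF k S] .
  have "sym2_pd (diag_congr (k powr \<alpha>) S)"
    using S k by (simp add: sym2_pd_diag_congr)
  then show ?thesis
    using p by (simp add: SG_def mpow_mpow_sym2_mat[OF S] mpow_mpow_sym2_mat[OF T]
        mpow_sym2_mat_one[OF S] mpow_sym2_mat_one[OF T] Falpha_diag_congr[OF S k]
        lam1_mpow_sym2_mat)
qed

lemma lam1_AM_sym2:
  assumes S: "sym2_pd S" and T: "sym2_pd T" and \<alpha>: "0 < \<alpha>" "\<alpha> < 1" and p: "0 < p" and q: "0 < q"
  shows "lam1 (AM \<alpha> q (mpow (sym2_mat S) (1/p)) (mpow (sym2_mat T) (1/p)))
    = eig_max ((1 - \<alpha>) *\<^sub>R sym2_powr (q/p) S + \<alpha> *\<^sub>R sym2_powr (q/p) T) powr (1/q)"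
proof -
  have "sym2_pd ((1 - \<alpha>) *\<^sub>R sym2_powr (q/p) S + \<alpha> *\<^sub>R sym2_powr (q/p) T)"
    using S T \<alpha> by (simp add: sym2_pd_add sym2_pd_scaleR sym2_pd_sym2_powr)
  moreover have "mpow (mpow (sym2_mat R) (1/p)) q = sym2_mat (sym2_powr (q/p) R)"
    if R: "sym2_pd R" for R
    using mpow_mpow_sym2_mat[OF R, of "1/p" q] mpow_sym2_mat[OF R, of "q/p"] by simp
  ultimately show ?thesis
    using S T q by (simp add: AM_def lam1_mpow_sym2_mat flip: sym2_mat_scaleR sym2_mat_add)
qed

lemma powr_fst_le_eig_max_if_lam1_SG_le_AM:
  assumes H: "\<forall>A B. posdef2 A \<longrightarrow> posdef2 B \<longrightarrow> lam1 (SG \<alpha> p A B) \<le> lam1 (AM \<alpha> q A B)"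
    and \<alpha>: "0 < \<alpha>" "\<alpha> < 1" and p: "0 < p" and q: "0 < q" and S: "sym2_pd S" and k: "0 < k"
  shows "fst S powr (q / p) \<le>
    eig_max ((1 - \<alpha>) *\<^sub>R sym2_powr (q / p) S + \<alpha> *\<^sub>R sym2_powr (q / p) (diag_congr k S))"
    (is "_ \<le> ?E")
proof -
  let ?A = "mpow (sym2_mat S) (1 / p)" and ?B = "mpow (sym2_mat (diag_congr k S)) (1 / p)"
  have T: "sym2_pd (diag_congr k S)"
    by (rule sym2_pd_diag_congr[OF k S])
  have S1: "0 < fst S"
    using S by (cases S) simp
  have "fst S powr (1 / p) \<le> eig_max (diag_congr (k powr \<alpha>) S) powr (1 / p)"
    using S1 p eig_max_ge(1) by (cases S) (auto intro!: powr_mono2)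
  also have "\<dots> = lam1 (SG \<alpha> p ?A ?B)"
    by (rule lam1_SG_diag_congr[OF S k p, symmetric])
  also have "\<dots> \<le> lam1 (AM \<alpha> q ?A ?B)"
    using H posdef2_mpow_sym2_mat[OF S] posdef2_mpow_sym2_mat[OF T] by blast
  also have "\<dots> = ?E powr (1 / q)"
    by (rule lam1_AM_sym2[OF S T \<alpha> p q])
  finally have "(fst S powr (1 / p)) powr q \<le> (?E powr (1 / q)) powr q"
    using q by (intro powr_mono2) auto
  moreover have "sym2_pd ((1 - \<alpha>) *\<^sub>R sym2_powr (q / p) S + \<alpha> *\<^sub>R sym2_powr (q / p) (diag_congr k S))"
    using S T \<alpha> by (simp add: sym2_pd_add sym2_pd_scaleR sym2_pd_sym2_powr)
  then have "0 < ?E"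
    using eig_min_pos eig_min_le_eig_max by (meson less_le_trans)
  ultimately show ?thesis
    using S1 p q by (simp add: powr_powr)
qed

section \<open>Continuity of real powers\<close>

lemma eig_max_conv_fst_snd:
  "eig_max S = (fst S + snd (snd S)) / 2 + sqrt (((fst S - snd (snd S)) / 2)\<^sup>2 + (fst (snd S))\<^sup>2)"
  by (cases S) simp

lemma eig_min_conv_fst_snd:
  "eig_min S = (fst S + snd (snd S)) / 2 - sqrt (((fst S - snd (snd S)) / 2)\<^sup>2 + (fst (snd S))\<^sup>2)"
  by (cases S) simp

lemma tendsto_eig_max [tendsto_intros]: "(f \<longlongrightarrow> S) F \<Longrightarrow> ((\<lambda>t. eig_max (f t)) \<longlongrightarrow> eig_max S) F"
  unfolding eig_max_conv_fst_snd by (intro tendsto_intros) simp_all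

lemma tendsto_eig_min [tendsto_intros]: "(f \<longlongrightarrow> S) F \<Longrightarrow> ((\<lambda>t. eig_min (f t)) \<longlongrightarrow> eig_min S) F"
  unfolding eig_min_conv_fst_snd by (intro tendsto_intros) simp_all

lemma tendsto_powr_slope_intercept:
  fixes f g :: "'a \<Rightarrow> real"
  assumes f: "(f \<longlongrightarrow> l1) F" and g: "(g \<longlongrightarrow> l2) F" and ne: "l1 \<noteq> l2"
    and nonneg: "eventually (\<lambda>t. 0 \<le> f t \<and> 0 \<le> g t) F" and r: "0 < r"
  shows "((\<lambda>t. powr_slope (f t) (g t) r) \<longlongrightarrow> powr_slope l1 l2 r) F"
    "((\<lambda>t. powr_intercept (f t) (g t) r) \<longlongrightarrow> powr_intercept l1 l2 r) F"
proof -
  have "((\<lambda>t. f t - g t) \<longlongrightarrow> l1 - l2) F"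
    using f g by (rule tendsto_diff)
  then have ev_ne: "eventually (\<lambda>t. f t - g t \<noteq> 0) F"
    using ne by (intro tendsto_imp_eventually_ne) auto
  have fr: "((\<lambda>t. f t powr r) \<longlongrightarrow> l1 powr r) F" and gr: "((\<lambda>t. g t powr r) \<longlongrightarrow> l2 powr r) F"
    using nonneg r by (auto intro!: tendsto_intros f g elim: eventually_mono)
  have "((\<lambda>t. (f t powr r - g t powr r) / (f t - g t)) \<longlongrightarrow> powr_slope l1 l2 r) F"
    using ne by (auto simp: powr_slope_def intro!: tendsto_intros fr gr f g)
  then show "((\<lambda>t. powr_slope (f t) (g t) r) \<longlongrightarrow> powr_slope l1 l2 r) F"
    by (rule Lim_transform_eventually) (use ev_ne in \<open>auto elim: eventually_mono simp: powr_slope_def\<close>)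
  have "((\<lambda>t. (f t * g t powr r - g t * f t powr r) / (f t - g t)) \<longlongrightarrow> powr_intercept l1 l2 r) F"
    using ne by (auto simp: powr_intercept_def intro!: tendsto_intros fr gr f g)
  then show "((\<lambda>t. powr_intercept (f t) (g t) r) \<longlongrightarrow> powr_intercept l1 l2 r) F"
    by (rule Lim_transform_eventually) (use ev_ne in \<open>auto elim: eventually_mono simp: powr_intercept_def\<close>)
qed

lemma tendsto_sym2_powr:
  assumes f: "(f \<longlongrightarrow> S) F" and ne: "eig_max S \<noteq> eig_min S"
    and pd: "eventually (\<lambda>t. sym2_pd (f t)) F" and r: "0 < r"
  shows "((\<lambda>t. sym2_powr r (f t)) \<longlongrightarrow> sym2_powr r S) F"
proof -
  have "eventually (\<lambda>t. 0 \<le> eig_max (f t) \<and> 0 \<le> eig_min (f t)) F"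
    using pd by eventually_elim (meson eig_min_pos eig_min_le_eig_max less_imp_le order.trans)
  note lim = tendsto_powr_slope_intercept[OF tendsto_eig_max[OF f] tendsto_eig_min[OF f] ne this r]
  show ?thesis
    unfolding sym2_powr_def by (intro tendsto_intros lim f)
qed

section \<open>A degenerating family\<close>

lemma powr_ge_one_minus:
  fixes z r :: real
  assumes z: "0 < z" and r: "0 \<le> r"
  shows "1 - r * (1 - z) / z \<le> z powr r"
proof -
  have "ln (1 / z) \<le> 1 / z - 1"
    using z by (intro ln_le_minus_one) simp
  then have "- ((1 - z) / z) \<le> ln z"
    using z by (simp add: ln_div field_simps)
  then have "r * (- ((1 - z) / z)) \<le> r * ln z"
    using r by (rule mult_left_mono)
  then have "1 - r * (1 - z) / z \<le> 1 + r * ln z"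
    by simp
  also have "\<dots> \<le> z powr r"
    using z exp_ge_add_one_self[of "r * ln z"] by (simp add: powr_def)
  finally show ?thesis .
qed

definition rank1_proj :: "real \<Rightarrow> sym2" where
  "rank1_proj z = (z, sqrt (z * (1 - z)), 1 - z)"

lemma eig_rank1_proj:
  assumes "0 \<le> z" "z \<le> 1"
  shows "eig_max (rank1_proj z) = 1" "eig_min (rank1_proj z) = 0"
proof -
  have "(sqrt (z * (1 - z)))\<^sup>2 = z * (1 - z)"
    using assms by simp
  then have "((z - (1 - z)) / 2)\<^sup>2 + (sqrt (z * (1 - z)))\<^sup>2 = (1 / 2)\<^sup>2"
    by (simp add: power2_eq_square field_simps)
  then have "sqrt (((z - (1 - z)) / 2)\<^sup>2 + (sqrt (z * (1 - z)))\<^sup>2) = 1 / 2"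
    by simp
  then show "eig_max (rank1_proj z) = 1" "eig_min (rank1_proj z) = 0"
    by (simp_all add: rank1_proj_def)
qed

lemma sym2_powr_rank1_proj:
  "0 \<le> z \<Longrightarrow> z \<le> 1 \<Longrightarrow> 0 < r \<Longrightarrow> sym2_powr r (rank1_proj z) = rank1_proj z"
  by (simp add: sym2_powr_def eig_rank1_proj powr_slope_def powr_intercept_def zero_prod_def)

lemma eig_min_diag: "eig_min (a, 0, c) = min a c"
  by (simp add: real_sqrt_abs min_def abs_if field_simps del: power_divide)

lemma sym2_powr_diag: "0 < z \<Longrightarrow> 0 < r \<Longrightarrow> sym2_powr r (z, 0, 0) = (z powr r, 0, 0)"
  using eig_max_diag[of z 0] eig_min_diag[of z 0]
  by (simp add: sym2_powr_def powr_slope_def powr_intercept_def del: eig_max.simps eig_min.simps)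

definition perturbed_proj :: "real \<Rightarrow> real \<Rightarrow> sym2" where
  "perturbed_proj z t = (1 - t) *\<^sub>R rank1_proj z + t *\<^sub>R (1, 0, 1)"

lemma sym2_pd_perturbed_proj:
  assumes z: "0 < z" "z \<le> 1" and t: "0 < t"
  shows "sym2_pd (perturbed_proj z t)"
proof -
  have "(sqrt (z * (1 - z)))\<^sup>2 = z * (1 - z)"
    using z by simp
  then have "((1 - t) * sqrt (z * (1 - z)))\<^sup>2 = ((1 - t) * z + t) * ((1 - t) * (1 - z) + t) - t"
    by (simp add: power_mult_distrib power2_eq_square algebra_simps)
  moreover have "0 < z + t * (1 - z)"
    using z t by (simp add: add_pos_nonneg)
  then have "0 < (1 - t) * z + t"
    by (simp add: algebra_simps)
  ultimately show ?thesis
    using t by (simp add: perturbed_proj_def rank1_proj_def)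
qed

lemma eig_max_rank1_mix_less_if:
  assumes w: "0 < w" "w < 1" and z: "0 \<le> z" "z \<le> 1" and g: "z < g"
    and gap: "w * z * (1 - z) < (g - z) * (g - w * (1 - z))"
  shows "eig_max (w *\<^sub>R rank1_proj z + (1 - w) *\<^sub>R (g, 0, 0)) < g"
proof -
  have "(w * sqrt (z * (1 - z)))\<^sup>2 = w * (w * z * (1 - z))"
    using z by (simp add: power_mult_distrib power2_eq_square)
  also have "\<dots> < w * ((g - z) * (g - w * (1 - z)))"
    using gap w by simp
  also have "\<dots> = (g - (w * z + (1 - w) * g)) * (g - w * (1 - z))"
    by (simp add: algebra_simps)
  finally have det: "(w * sqrt (z * (1 - z)))\<^sup>2 < (g - (w * z + (1 - w) * g)) * (g - w * (1 - z))" .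
  have "0 < w * (g - z)"
    using w g by simp
  then have "w * z + (1 - w) * g < g"
    by (simp add: algebra_simps)
  moreover have "0 \<le> w * z * (1 - z)"
    using w z by simp
  then have "0 < (g - z) * (g - w * (1 - z))"
    using gap by linarith
  then have "w * (1 - z) < g"
    using g by (simp add: zero_less_mult_iff)
  ultimately have "eig_max (w * z + (1 - w) * g, w * sqrt (z * (1 - z)), w * (1 - z)) < g"
    using det by (rule eig_max_less)
  then show ?thesis
    by (simp add: rank1_proj_def)
qed

text \<open>Any \<open>z\<close> close enough to 1 works, since \<open>z\<^sup>r - z \<approx> (1 - r) (1 - z) > w (1 - z)\<close>;
  \<open>1 - z = (1 - w - r) / 2\<close> is an explicit choice.\<close>
lemma eig_max_rank1_mix_less:
  fixes w r :: real
  assumes w: "0 < w" "w < 1" and r: "0 < r" "r < 1 - w"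
  obtains z where "0 < z" "z < 1"
    "eig_max (w *\<^sub>R rank1_proj z + (1 - w) *\<^sub>R (z powr r, 0, 0)) < z powr r"
proof -
  define u where "u = (1 - w - r) / 2"
  define z where "z = 1 - u"
  define g where "g = z powr r"
  have u: "0 < u" "2 * u < 1 - w" "r = 1 - w - 2 * u"
    using w r by (auto simp: u_def field_simps)
  have z: "0 < z" "z < 1" "1 - z = u"
    using u w by (auto simp: z_def)
  have "1 - r * (1 - z) / z - z = (z - r * u - z * z) / z"
    using z(1) unfolding z(3) by (simp add: field_simps)
  also have "z - r * u - z * z = u * (w + u)"
    by (simp add: u(3) z_def algebra_simps)
  finally have gz: "u * (w + u) / z \<le> g - z"
    using powr_ge_one_minus[of z r] z r by (simp add: g_def)
  have pos: "0 < u * (w + u) / z"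
    using u w z by simp
  have "w * u < u"
    using u w by simp
  then have zwu: "w * u < z"
    using u w unfolding z_def by linarith
  have "u * (1 + 2 * w) < (1 - w) / 2 * (1 + 2 * w)"
    using u w by (intro mult_strict_right_mono) auto
  then have "0 < 1 + w - w * w - u * (1 + 2 * w)"
    using w by (simp add: algebra_simps)
  then have "0 < u * (1 + w - w * w - u * (1 + 2 * w))"
    using u by simp
  also have "\<dots> = (w + u) * (z - w * u) - w * z * z"
    by (simp add: z_def algebra_simps)
  finally have "u * (w * z * z) < u * ((w + u) * (z - w * u))"
    using u by simp
  then have "u * (w * z * z) / z < u * ((w + u) * (z - w * u)) / z"
    using z(1) by (rule divide_strict_right_mono)
  then have "w * z * u < u * (w + u) / z * (z - w * u)"
    using z by (simp add: mult_ac)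
  also have "\<dots> \<le> (g - z) * (g - w * u)"
    using gz pos zwu by (intro mult_mono) auto
  finally have "w * z * (1 - z) < (g - z) * (g - w * (1 - z))"
    unfolding z(3) .
  moreover have "z < g"
    using gz pos by linarith
  ultimately have "eig_max (w *\<^sub>R rank1_proj z + (1 - w) *\<^sub>R (g, 0, 0)) < g"
    using w z by (intro eig_max_rank1_mix_less_if) auto
  then show ?thesis
    using that z by (simp add: g_def)
qed

lemma tendsto_perturbed_proj:
  "((\<lambda>t. perturbed_proj z t) \<longlongrightarrow> rank1_proj z) (at_right 0)"
  "((\<lambda>t. diag_congr t (perturbed_proj z t)) \<longlongrightarrow> (z, 0, 0)) (at_right 0)"
  by (auto simp: perturbed_proj_def rank1_proj_def intro!: tendsto_eq_intros)

lemma rank1_limit_inequality: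
  fixes w r z :: real
  assumes r: "0 < r" and z: "0 < z" "z < 1"
    and le: "\<And>t. 0 < t \<Longrightarrow> fst (perturbed_proj z t) powr r \<le>
      eig_max (w *\<^sub>R sym2_powr r (perturbed_proj z t)
        + (1 - w) *\<^sub>R sym2_powr r (diag_congr t (perturbed_proj z t)))"
  shows "z powr r \<le> eig_max (w *\<^sub>R rank1_proj z + (1 - w) *\<^sub>R (z powr r, 0, 0))"
proof -
  have t_pos: "eventually (\<lambda>t. 0 < t) (at_right (0::real))"
    by (rule eventually_at_right_less)
  have pd: "eventually (\<lambda>t. sym2_pd (perturbed_proj z t)) (at_right 0)"
    "eventually (\<lambda>t. sym2_pd (diag_congr t (perturbed_proj z t))) (at_right 0)"
    using t_pos by (eventually_elim, use z sym2_pd_perturbed_proj sym2_pd_diag_congr in auto)+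
  have "((\<lambda>t. sym2_powr r (perturbed_proj z t)) \<longlongrightarrow> rank1_proj z) (at_right 0)"
    using tendsto_sym2_powr[OF tendsto_perturbed_proj(1) _ pd(1) r] z
    by (simp add: eig_rank1_proj sym2_powr_rank1_proj r)
  moreover have "((\<lambda>t. sym2_powr r (diag_congr t (perturbed_proj z t))) \<longlongrightarrow> (z powr r, 0, 0)) (at_right 0)"
    using tendsto_sym2_powr[OF tendsto_perturbed_proj(2) _ pd(2) r] z
    by (simp add: eig_max_diag eig_min_diag sym2_powr_diag r del: eig_max.simps eig_min.simps)
  ultimately have "((\<lambda>t. eig_max (w *\<^sub>R sym2_powr r (perturbed_proj z t)
      + (1 - w) *\<^sub>R sym2_powr r (diag_congr t (perturbed_proj z t))))
      \<longlongrightarrow> eig_max (w *\<^sub>R rank1_proj z + (1 - w) *\<^sub>R (z powr r, 0, 0))) (at_right 0)"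
    by (intro tendsto_intros)
  moreover have "((\<lambda>t. fst (perturbed_proj z t) powr r) \<longlongrightarrow> z powr r) (at_right 0)"
    using z by (auto simp: perturbed_proj_def rank1_proj_def intro!: tendsto_eq_intros)
  moreover note eventually_mono[OF t_pos le]
  ultimately show ?thesis
    by (rule tendsto_le[OF trivial_limit_at_right_real])
qed

lemma exponent_bound_rank1_limit:
  fixes w r :: real
  assumes w: "0 < w" "w < 1" and r: "0 < r"
    and le: "\<And>z t. 0 < z \<Longrightarrow> z < 1 \<Longrightarrow> 0 < t \<Longrightarrow> fst (perturbed_proj z t) powr r \<le>
      eig_max (w *\<^sub>R sym2_powr r (perturbed_proj z t)
        + (1 - w) *\<^sub>R sym2_powr r (diag_congr t (perturbed_proj z t)))"
  shows "1 - w \<le> r"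
proof (rule ccontr)
  assume "\<not> 1 - w \<le> r"
  then obtain z where z: "0 < z" "z < 1"
    and less: "eig_max (w *\<^sub>R rank1_proj z + (1 - w) *\<^sub>R (z powr r, 0, 0)) < z powr r"
    using eig_max_rank1_mix_less[OF w r] by force
  moreover have "z powr r \<le> eig_max (w *\<^sub>R rank1_proj z + (1 - w) *\<^sub>R (z powr r, 0, 0))"
    using rank1_limit_inequality[OF r z le[OF z]] by blast
  ultimately show False
    by simp
qed

lemma exponent_bound_if_lam1_SG_le_AM:
  assumes \<alpha>: "0 < \<alpha>" "\<alpha> < 1" and p: "0 < p" and q: "0 < q"
    and H: "\<forall>A B. posdef2 A \<longrightarrow> posdef2 B \<longrightarrow> lam1 (SG \<alpha> p A B) \<le> lam1 (AM \<alpha> q A B)"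
  shows "max \<alpha> (1 - \<alpha>) \<le> q / p"
proof -
  have r: "0 < q / p"
    using p q by simp
  have X: "sym2_pd (perturbed_proj z t)" if "0 < z" "z < 1" "0 < t" for z t
    using sym2_pd_perturbed_proj that by simp
  have "1 - (1 - \<alpha>) \<le> q / p"
  proof (rule exponent_bound_rank1_limit[OF _ _ r])
    fix z t :: real
    assume zt: "0 < z" "z < 1" "0 < t"
    show "fst (perturbed_proj z t) powr (q / p) \<le>
      eig_max ((1 - \<alpha>) *\<^sub>R sym2_powr (q / p) (perturbed_proj z t)
        + (1 - (1 - \<alpha>)) *\<^sub>R sym2_powr (q / p) (diag_congr t (perturbed_proj z t)))"
      using powr_fst_le_eig_max_if_lam1_SG_le_AM[OF H \<alpha> p q X[OF zt] zt(3)] by simp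
  qed (use \<alpha> in auto)
  moreover have "1 - \<alpha> \<le> q / p"
  proof (rule exponent_bound_rank1_limit[OF \<alpha> r])
    fix z t :: real
    assume zt: "0 < z" "z < 1" "0 < t"
    \<comment> \<open>the roles are swapped: the congruent matrix comes first, with \<open>k = 1/t\<close>\<close>
    have "diag_congr (1 / t) (diag_congr t (perturbed_proj z t)) = perturbed_proj z t"
      using zt by (simp add: diag_congr_diag_congr diag_congr_one)
    then show "fst (perturbed_proj z t) powr (q / p) \<le>
      eig_max (\<alpha> *\<^sub>R sym2_powr (q / p) (perturbed_proj z t)
        + (1 - \<alpha>) *\<^sub>R sym2_powr (q / p) (diag_congr t (perturbed_proj z t)))"
      using powr_fst_le_eig_max_if_lam1_SG_le_AM[OF H \<alpha> p q
          sym2_pd_diag_congr[OF zt(3) X[OF zt]], of "1 / t"] zt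
      by (simp add: add.commute)
  qed
  ultimately show ?thesis
    by simp
qed

theorem theorem4p27:
  fixes \<alpha> p q :: real
  assumes "0 < \<alpha>" and "\<alpha> < 1" and "0 < p" and "0 < q"
  shows "((\<forall>A B. posdef2 A \<longrightarrow> posdef2 B \<longrightarrow> lam1 (SG \<alpha> p A B) \<le> lam1 (AM \<alpha> q A B))
            \<longrightarrow> q / p \<ge> max \<alpha> (1 - \<alpha>))
       \<and> ((\<forall>A B. posdef2 A \<longrightarrow> posdef2 B \<longrightarrow> weak_maj2 (SG \<alpha> p A B) (AM \<alpha> q A B))
            \<longrightarrow> q / p \<ge> max \<alpha> (1 - \<alpha>))"
proof -
  have "(\<forall>A B. posdef2 A \<longrightarrow> posdef2 B \<longrightarrow> lam1 (SG \<alpha> p A B) \<le> lam1 (AM \<alpha> q A B))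
      \<longrightarrow> q / p \<ge> max \<alpha> (1 - \<alpha>)"
    using exponent_bound_if_lam1_SG_le_AM[OF assms] by blast
  moreover have "weak_maj2 X Y \<Longrightarrow> lam1 X \<le> lam1 Y" for X Y
    by (simp add: weak_maj2_def)
  ultimately show ?thesis
    by blast
qed

end
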